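(* For every $n\geq1$, the number of $\mathcal{B}_n$-orbits of right $0/1$-triangles in $[0,1]^n$ equals $\left\lfloor\frac{n}{2}\right\rfloor\left\lceil\frac{n}{2}\right\rceil$.
   Context: A $0/1$-triangle in $[0,1]^n$ is the convex hull of three distinct points of $\{0,1\}^n$; it is right if one of its angles equals $\pi/2$. $\mathcal{B}_n$ is the hyperoctahedral group of symmetries of $[0,1]^n$, acting on $\{0,1\}^n$ by permuting coordinates and complementing a subset of coordinates; triangles are counted up to this action. *)

theory Defs
  imports "HOL-Analysis.Analysis"
begin

text \<open>The n-cube [0,1]^n is modelled in real^'n, where the finite index type 'n
has CARD('n) = n (so n >= 1 automatically, and n is arbitrary).\<close>

definition cube_vertices :: "(real^'n) set" where
  "cube_vertices = {x. \<forall>i. x$i = 0 \<or> x$i = 1}"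

definition vec_angle :: "real^'n \<Rightarrow> real^'n \<Rightarrow> real" where
  "vec_angle u v = arccos (inner u v / (norm u * norm v))"

definition zo_triangle :: "(real^'n) set \<Rightarrow> bool" where
  "zo_triangle T \<longleftrightarrow> (\<exists>a b c. a \<in> cube_vertices \<and> b \<in> cube_vertices \<and> c \<in> cube_vertices \<and>
      a \<noteq> b \<and> a \<noteq> c \<and> b \<noteq> c \<and> T = convex hull {a, b, c})"

definition right_zo_triangle :: "(real^'n) set \<Rightarrow> bool" where
  "right_zo_triangle T \<longleftrightarrow> (\<exists>a b c. a \<in> cube_vertices \<and> b \<in> cube_vertices \<and> c \<in> cube_vertices \<and>
      a \<noteq> b \<and> a \<noteq> c \<and> b \<noteq> c \<and> T = convex hull {a, b, c} \<and>
      vec_angle (b - a) (c - a) = pi / 2)"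

definition hyperoct_map :: "('n \<Rightarrow> 'n) \<Rightarrow> 'n set \<Rightarrow> real^'n \<Rightarrow> real^'n" where
  "hyperoct_map \<sigma> C x = (\<chi> i. if i \<in> C then 1 - x $ (\<sigma> i) else x $ (\<sigma> i))"

definition hyperoct :: "(real^'n \<Rightarrow> real^'n) set" where
  "hyperoct = {hyperoct_map \<sigma> C | \<sigma> C. \<sigma> permutes (UNIV :: 'n set)}"

definition B_orbit :: "(real^'n) set \<Rightarrow> (real^'n) set set" where
  "B_orbit T = {g ` T | g. g \<in> hyperoct}"

end

theory Submission
  imports Defs
begin

text \<open>
  If a 0/1-triangle with vertices \<open>a, b, c\<close> has a right angle at \<open>a\<close>, then
  \<open>b - a\<close> and \<open>c - a\<close> are \<open>{-1,0,1}\<close>-vectors whose inner product counts the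
  coordinates in which both differ from \<open>a\<close>, so their supports \<open>B\<close>, \<open>C\<close> are
  disjoint. Complementing the coordinates where \<open>a\<close> is \<open>1\<close> moves the triangle
  to \<open>conv {0, 1\<^sub>B, 1\<^sub>C}\<close>, and a coordinate permutation moves this to any other
  such triangle with the same (unordered) pair \<open>|B|, |C|\<close>. Conversely the
  squared side lengths \<open>{|B|, |C|, |B| + |C|}\<close> are invariant under the group
  and determine \<open>{|B|, |C|}\<close>. Hence the orbits correspond to the pairs
  \<open>1 \<le> p \<le> q\<close> with \<open>p + q \<le> n\<close>, of which there are \<open>\<lfloor>n/2\<rfloor>\<lceil>n/2\<rceil>\<close>.
\<close>

section \<open>Vertices of the cube\<close>

lemma convex_hull_Int_cube_vertices:
  assumes "finite S" "S \<subseteq> cube_vertices"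
  shows "convex hull S \<inter> cube_vertices = S"
proof
  show "S \<subseteq> convex hull S \<inter> cube_vertices"
    using assms(2) hull_subset[of S convex] by blast
  show "convex hull S \<inter> cube_vertices \<subseteq> S"
  proof
    fix x assume x: "x \<in> convex hull S \<inter> cube_vertices"
    then obtain u where u: "\<forall>s\<in>S. 0 \<le> u s" "sum u S = 1" "(\<Sum>s\<in>S. u s *\<^sub>R s) = x"
      using convex_hull_finite[OF assms(1)] by auto
    have "\<exists>s\<in>S. 0 < u s"
    proof (rule ccontr)
      assume "\<not> (\<exists>s\<in>S. 0 < u s)"
      then have "\<forall>s\<in>S. u s = 0" using u(1) by (metis not_less order_antisym)
      then show False using u(2) by simp
    qed
    then obtain s where s: "s \<in> S" "0 < u s" by blast
    have vanish: "f s = 0" if "\<forall>t\<in>S. 0 \<le> f t" "(\<Sum>t\<in>S. f t) = 0" for f :: "_ \<Rightarrow> real"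
      using sum_nonneg_eq_0_iff[OF assms(1)] that s(1) by blast
    \<comment> \<open>A 0/1-vector that is a convex combination of 0/1-vectors agrees with each of
      them that has positive weight, coordinate by coordinate.\<close>
    have "s $ i = x $ i" for i
    proof -
      have coord: "x $ i = (\<Sum>t\<in>S. u t * t $ i)"
        using u(3) by (auto simp: sum_component)
      have bin: "t $ i = 0 \<or> t $ i = 1" if "t \<in> insert x S" for t
        using that x assms(2) by (auto simp: cube_vertices_def)
      have "\<forall>t\<in>S. 0 \<le> u t * t $ i" "\<forall>t\<in>S. 0 \<le> u t * (1 - t $ i)"
        using u(1) bin by (metis insertCI mult_nonneg_nonneg order_refl zero_le_one diff_ge_0_iff_ge)+
      moreover have "(\<Sum>t\<in>S. u t * (1 - t $ i)) = 1 - x $ i"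
        using coord u(2) by (simp add: algebra_simps sum_subtractf)
      ultimately show ?thesis
        using coord bin[of x] vanish[of "\<lambda>t. u t * t $ i"] vanish[of "\<lambda>t. u t * (1 - t $ i)"] s(2)
        by auto
    qed
    then show "x \<in> S" using s(1) by (metis vec_eq_iff)
  qed
qed

lemma zero_in_cube_vertices: "0 \<in> cube_vertices"
  by (simp add: cube_vertices_def)

definition indicator_vector :: "'n set \<Rightarrow> real^'n" where
  "indicator_vector B = (\<chi> i. if i \<in> B then 1 else 0)"

lemma indicator_vector_cube_vertices: "indicator_vector B \<in> cube_vertices"
  by (simp add: indicator_vector_def cube_vertices_def)

lemma indicator_vector_empty: "indicator_vector {} = 0"
  by (simp add: indicator_vector_def vec_eq_iff)

lemma indicator_vector_eq_iff: "indicator_vector B = indicator_vector C \<longleftrightarrow> B = C"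
  by (auto simp: indicator_vector_def vec_eq_iff)

lemma sum_indicator_card: "(\<Sum>i\<in>(UNIV :: 'n::finite set). if i \<in> B then 1 else 0) = real (card B)"
  by (simp add: sum.If_cases)

lemma inner_cube_vertex_diffs:
  assumes "a \<in> cube_vertices" "b \<in> cube_vertices" "c \<in> cube_vertices"
  shows "inner (b - a) (c - a) = real (card ({i. b $ i \<noteq> a $ i} \<inter> {i. c $ i \<noteq> a $ i}))"
proof -
  have "(b - a) $ i * (c - a) $ i = (if i \<in> {i. b $ i \<noteq> a $ i} \<inter> {i. c $ i \<noteq> a $ i} then 1 else 0)"
    for i
  proof -
    have "a $ i = 0 \<or> a $ i = 1" "b $ i = 0 \<or> b $ i = 1" "c $ i = 0 \<or> c $ i = 1"
      using assms by (auto simp: cube_vertices_def)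
    then show ?thesis by auto
  qed
  then show ?thesis
    unfolding inner_vec_def by (simp only: sum_indicator_card inner_real_def)
qed

lemma norm_indicator_vector_diff:
  assumes "B \<inter> C = {}"
  shows "(norm (indicator_vector B - indicator_vector C :: real^'n))\<^sup>2 = real (card B) + real (card C)"
proof -
  have "(norm (indicator_vector B - indicator_vector C :: real^'n))\<^sup>2
        = (\<Sum>i\<in>UNIV. if i \<in> B \<union> C then 1 else 0)"
    unfolding dot_square_norm[symmetric] inner_vec_def indicator_vector_def
    using assms by (intro sum.cong) auto
  also have "\<dots> = real (card (B \<union> C))"
    by (rule sum_indicator_card)
  also have "\<dots> = real (card B) + real (card C)"
    using assms by (simp add: card_Un_disjoint)
  finally show ?thesis .
qed

lemma vec_angle_eq_pi_half_iff: "vec_angle u v = pi / 2 \<longleftrightarrow> inner u v = 0"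
proof -
  let ?t = "inner u v / (norm u * norm v)"
  have "\<bar>inner u v\<bar> \<le> norm u * norm v" by (rule Cauchy_Schwarz_ineq2)
  then have "\<bar>?t\<bar> \<le> 1"
    by (auto simp: abs_divide divide_le_eq_1 zero_less_mult_iff)
  then have "arccos ?t = arccos 0 \<longleftrightarrow> ?t = 0"
    using arccos_eq_iff[of ?t 0] by simp
  then show ?thesis
    by (auto simp: vec_angle_def)
qed

section \<open>The hyperoctahedral group\<close>

lemma hyperoct_map_compose:
  "hyperoct_map \<sigma> C \<circ> hyperoct_map \<tau> D = hyperoct_map (\<tau> \<circ> \<sigma>) {i. (i \<in> C) \<noteq> (\<sigma> i \<in> D)}"
  by (auto simp: hyperoct_map_def vec_eq_iff)

lemma hyperoct_compose: "g \<in> hyperoct \<Longrightarrow> h \<in> hyperoct \<Longrightarrow> h \<circ> g \<in> hyperoct"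
proof -
  assume "g \<in> hyperoct" "h \<in> hyperoct"
  then obtain \<sigma> C \<tau> D where "g = hyperoct_map \<tau> D" "\<tau> permutes UNIV"
    "h = hyperoct_map \<sigma> C" "\<sigma> permutes UNIV"
    unfolding hyperoct_def by auto
  moreover from this have "h \<circ> g = hyperoct_map (\<tau> \<circ> \<sigma>) {i. (i \<in> C) \<noteq> (\<sigma> i \<in> D)}"
    by (simp add: hyperoct_map_compose)
  ultimately show ?thesis
    unfolding hyperoct_def by (blast intro: permutes_compose)
qed

lemma id_in_hyperoct: "id \<in> hyperoct"
proof -
  have "id = hyperoct_map id {}" by (auto simp: hyperoct_map_def vec_eq_iff)
  then show ?thesis unfolding hyperoct_def using permutes_id by blast
qed

lemma hyperoct_inverse:
  assumes "g \<in> hyperoct"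
  obtains g' where "g' \<in> hyperoct" "g' \<circ> g = id"
proof -
  obtain \<sigma> C where g: "g = hyperoct_map \<sigma> C" "\<sigma> permutes UNIV"
    using assms unfolding hyperoct_def by auto
  let ?g' = "hyperoct_map (inv \<sigma>) {i. inv \<sigma> i \<in> C}"
  have "?g' \<in> hyperoct" unfolding hyperoct_def using g permutes_inv by blast
  moreover have "?g' \<circ> g = id"
    unfolding g hyperoct_map_compose using permutes_inverses[OF g(2)]
    by (auto simp: hyperoct_map_def vec_eq_iff)
  ultimately show ?thesis using that by blast
qed

lemma hyperoct_affine_isometry:
  assumes "g \<in> hyperoct"
  obtains a L where "linear L" "\<And>v. norm (L v) = norm v" "g = (\<lambda>x. a + L x)"
proof -
  obtain \<sigma> C where g: "g = hyperoct_map \<sigma> C" "\<sigma> permutes UNIV"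
    using assms unfolding hyperoct_def by auto
  define L where "L v = (\<chi> i. (if i \<in> C then -1 else 1) * v $ \<sigma> i)" for v :: "real^'a"
  have "linear L"
    by (auto intro!: linearI simp: L_def vec_eq_iff algebra_simps)
  moreover have "norm (L v) = norm v" for v
  proof -
    have "(norm (L v))\<^sup>2 = (\<Sum>i\<in>UNIV. (v $ \<sigma> i)\<^sup>2)"
      unfolding dot_square_norm[symmetric] inner_vec_def
      by (rule sum.cong) (auto simp: L_def power2_eq_square)
    also have "\<dots> = (\<Sum>i\<in>UNIV. (v $ i)\<^sup>2)"
      using sum.permute[OF g(2), of "\<lambda>i. (v $ i)\<^sup>2"] by (simp add: comp_def)
    also have "\<dots> = (norm v)\<^sup>2"
      unfolding dot_square_norm[symmetric] inner_vec_def by (simp add: power2_eq_square)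
    finally show ?thesis by (simp add: power2_eq_iff_nonneg)
  qed
  moreover have "g = (\<lambda>x. indicator_vector C + L x)"
    unfolding g hyperoct_map_def indicator_vector_def L_def by (auto simp: vec_eq_iff)
  ultimately show ?thesis using that by blast
qed

lemma hyperoct_image_convex_hull:
  assumes "g \<in> hyperoct"
  shows "g ` (convex hull S) = convex hull (g ` S)"
proof -
  obtain a L where L: "linear L" "g = (\<lambda>x. a + L x)"
    using hyperoct_affine_isometry[OF assms] by metis
  have "g ` (convex hull S) = (\<lambda>x. a + x) ` (convex hull (L ` S))"
    unfolding L(2) convex_hull_linear_image[OF L(1), symmetric] by (simp add: image_image)
  also have "\<dots> = convex hull (g ` S)"
    unfolding convex_hull_translation[symmetric] L(2) by (simp add: image_image)
  finally show ?thesis .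
qed

lemma hyperoct_dist:
  assumes "g \<in> hyperoct"
  shows "norm (g x - g y) = norm (x - y)"
proof -
  obtain a L where L: "linear L" "\<And>v. norm (L v) = norm v" "g = (\<lambda>x. a + L x)"
    using hyperoct_affine_isometry[OF assms] by metis
  have "g x - g y = L (x - y)" using L(1,3) by (simp add: linear_diff)
  then show ?thesis using L(2) by simp
qed

lemma hyperoct_cube_vertices: "g \<in> hyperoct \<Longrightarrow> x \<in> cube_vertices \<Longrightarrow> g x \<in> cube_vertices"
  unfolding hyperoct_def cube_vertices_def hyperoct_map_def by (auto, metis+)

lemma B_orbit_image:
  assumes "g \<in> hyperoct"
  shows "B_orbit (g ` T) = B_orbit T"
proof
  show "B_orbit (g ` T) \<subseteq> B_orbit T"
    unfolding B_orbit_def image_comp using hyperoct_compose[OF assms] by blast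
  obtain g' where g': "g' \<in> hyperoct" "g' \<circ> g = id"
    using hyperoct_inverse[OF assms] by blast
  have "g' ` g ` T = T"
    unfolding image_comp g'(2) by simp
  show "B_orbit T \<subseteq> B_orbit (g ` T)"
  proof
    fix S assume "S \<in> B_orbit T"
    then obtain h where h: "h \<in> hyperoct" "S = h ` T"
      unfolding B_orbit_def by blast
    then have "S = (h \<circ> g') ` g ` T"
      unfolding image_comp[symmetric] using \<open>g' ` g ` T = T\<close> by simp
    moreover have "h \<circ> g' \<in> hyperoct"
      using hyperoct_compose[OF g'(1) h(1)] .
    ultimately show "S \<in> B_orbit (g ` T)"
      unfolding B_orbit_def by blast
  qed
qed

lemma B_orbit_eq_iff: "B_orbit T = B_orbit T' \<longleftrightarrow> (\<exists>g\<in>hyperoct. g ` T = T')"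
proof
  have "T' = id ` T'" by simp
  then have "T' \<in> B_orbit T'"
    unfolding B_orbit_def using id_in_hyperoct by blast
  moreover assume "B_orbit T = B_orbit T'"
  ultimately have "T' \<in> B_orbit T" by simp
  then show "\<exists>g\<in>hyperoct. g ` T = T'"
    unfolding B_orbit_def by blast
qed (use B_orbit_image in blast)

section \<open>Right triangles up to symmetry\<close>

text \<open>For a 0/1-triangle \<open>T\<close> the points of \<open>T \<inter> cube_vertices\<close> are exactly its
  vertices, so this is the set of its squared side lengths.\<close>
definition sq_side_lengths :: "(real^'n) set \<Rightarrow> real set" where
  "sq_side_lengths T =
     {(norm (x - y))\<^sup>2 | x y. x \<in> T \<inter> cube_vertices \<and> y \<in> T \<inter> cube_vertices \<and> x \<noteq> y}"

lemma sq_side_lengths_triangle: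
  assumes "a \<in> cube_vertices" "b \<in> cube_vertices" "c \<in> cube_vertices"
    and "a \<noteq> b" "a \<noteq> c" "b \<noteq> c"
  shows "sq_side_lengths (convex hull {a, b, c}) = {(norm (a - b))\<^sup>2, (norm (a - c))\<^sup>2, (norm (b - c))\<^sup>2}"
proof -
  have "convex hull {a, b, c} \<inter> cube_vertices = {a, b, c}"
    using assms by (intro convex_hull_Int_cube_vertices) auto
  then show ?thesis
    unfolding sq_side_lengths_def using assms by (auto simp: norm_minus_commute)
qed

lemma hyperoct_image_Int_cube_vertices:
  assumes "g \<in> hyperoct"
  shows "g ` T \<inter> cube_vertices = g ` (T \<inter> cube_vertices)"
proof -
  obtain g' where g': "g' \<in> hyperoct" "g' \<circ> g = id"
    using hyperoct_inverse[OF assms] by blast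
  have preimage: "x \<in> cube_vertices" if "g x \<in> cube_vertices" for x
    using hyperoct_cube_vertices[OF g'(1) that] g'(2) by (metis comp_apply id_apply)
  show ?thesis
  proof
    show "g ` T \<inter> cube_vertices \<subseteq> g ` (T \<inter> cube_vertices)"
      using preimage by blast
    show "g ` (T \<inter> cube_vertices) \<subseteq> g ` T \<inter> cube_vertices"
      using hyperoct_cube_vertices[OF assms] by blast
  qed
qed

lemma sq_side_lengths_hyperoct_image:
  assumes "g \<in> hyperoct"
  shows "sq_side_lengths (g ` T) = sq_side_lengths T"
proof -
  have "inj g"
    by (metis assms hyperoct_inverse inj_on_id inj_on_imageI2)
  have "{(norm (x - y))\<^sup>2 | x y. x \<in> g ` S \<and> y \<in> g ` S \<and> x \<noteq> y}
        = {(norm (g x - g y))\<^sup>2 | x y. x \<in> S \<and> y \<in> S \<and> g x \<noteq> g y}" for S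
    by blast
  then show ?thesis
    by (simp add: sq_side_lengths_def hyperoct_image_Int_cube_vertices[OF assms]
        inj_eq[OF \<open>inj g\<close>] hyperoct_dist[OF assms])
qed

definition corner_triangle :: "'n set \<Rightarrow> 'n set \<Rightarrow> (real^'n) set" where
  "corner_triangle B C = convex hull {0, indicator_vector B, indicator_vector C}"

lemma corner_triangle_commute: "corner_triangle B C = corner_triangle C B"
  by (simp add: corner_triangle_def insert_commute)

lemma corner_triangle_vertices_distinct:
  assumes "B \<inter> C = {}" "B \<noteq> {}" "C \<noteq> {}"
  shows "0 \<noteq> indicator_vector B" "0 \<noteq> indicator_vector C"
    "indicator_vector B \<noteq> indicator_vector C"
  using assms by (auto simp: indicator_vector_eq_iff simp flip: indicator_vector_empty)

lemma sq_side_lengths_corner_triangle: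
  assumes "B \<inter> C = {}" "B \<noteq> {}" "C \<noteq> {}"
  shows "sq_side_lengths (corner_triangle B C :: (real^'n) set)
           = {real (card B), real (card C), real (card B) + real (card C)}"
  unfolding corner_triangle_def
  using sq_side_lengths_triangle[OF zero_in_cube_vertices indicator_vector_cube_vertices
      indicator_vector_cube_vertices corner_triangle_vertices_distinct[OF assms]]
    norm_indicator_vector_diff[OF assms(1)]
    norm_indicator_vector_diff[of "{}" B, unfolded indicator_vector_empty]
    norm_indicator_vector_diff[of "{}" C, unfolded indicator_vector_empty]
  by simp

lemma right_zo_triangle_corner_triangle:
  assumes "B \<inter> C = {}" "B \<noteq> {}" "C \<noteq> {}"
  shows "right_zo_triangle (corner_triangle B C :: (real^'n) set)"
proof -
  have "inner (indicator_vector B) (indicator_vector C :: real^'n) = 0"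
    unfolding inner_vec_def indicator_vector_def using assms(1) by (intro sum.neutral) auto
  then have "vec_angle (indicator_vector B - 0) (indicator_vector C - 0 :: real^'n) = pi / 2"
    by (simp add: vec_angle_eq_pi_half_iff[THEN iffD2])
  then show ?thesis
    unfolding right_zo_triangle_def corner_triangle_def
    using corner_triangle_vertices_distinct[OF assms] indicator_vector_cube_vertices
      zero_in_cube_vertices
    by blast
qed

lemma hyperoct_map_id_cube_vertex:
  assumes "a \<in> cube_vertices" "x \<in> cube_vertices"
  shows "hyperoct_map id {i. a $ i = 1} x = indicator_vector {i. x $ i \<noteq> a $ i}"
  unfolding vec_eq_iff
proof
  fix i
  have "a $ i = 0 \<or> a $ i = 1" "x $ i = 0 \<or> x $ i = 1"
    using assms by (auto simp: cube_vertices_def)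
  then show "hyperoct_map id {i. a $ i = 1} x $ i = indicator_vector {i. x $ i \<noteq> a $ i} $ i"
    by (auto simp: hyperoct_map_def indicator_vector_def)
qed

lemma right_zo_triangle_normal_form:
  assumes "right_zo_triangle T"
  obtains g B C where "g \<in> hyperoct" "B \<inter> C = {}" "B \<noteq> {}" "C \<noteq> {}"
    "g ` T = corner_triangle B C"
proof -
  obtain a b c where abc: "a \<in> cube_vertices" "b \<in> cube_vertices" "c \<in> cube_vertices"
    "a \<noteq> b" "a \<noteq> c" "T = convex hull {a, b, c}" "vec_angle (b - a) (c - a) = pi / 2"
    using assms unfolding right_zo_triangle_def by blast
  define B where "B = {i. b $ i \<noteq> a $ i}"
  define C where "C = {i. c $ i \<noteq> a $ i}"
  define g where "g = hyperoct_map id {i. a $ i = 1}"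
  have "g \<in> hyperoct"
    unfolding g_def hyperoct_def using permutes_id by blast
  moreover have "card (B \<inter> C) = 0"
    using vec_angle_eq_pi_half_iff[THEN iffD1, OF abc(7)] inner_cube_vertex_diffs[OF abc(1-3)]
    by (simp add: B_def C_def)
  then have "B \<inter> C = {}" by simp
  moreover have "B \<noteq> {}" "C \<noteq> {}"
    unfolding B_def C_def using abc(4,5) by (metis (mono_tags) Collect_empty_eq vec_eq_iff)+
  moreover have "g ` {a, b, c} = {0, indicator_vector B, indicator_vector C}"
    using hyperoct_map_id_cube_vertex[OF abc(1)] abc(1-3)
    by (simp add: g_def B_def C_def indicator_vector_empty)
  then have "g ` T = corner_triangle B C"
    using hyperoct_image_convex_hull[OF \<open>g \<in> hyperoct\<close>] abc(6) by (simp add: corner_triangle_def)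
  ultimately show ?thesis using that by blast
qed

lemma permutation_carrying_disjoint_pair:
  fixes B C B' C' :: "'a::finite set"
  assumes "B \<inter> C = {}" "B' \<inter> C' = {}" "card B = card B'" "card C = card C'"
  obtains \<sigma> where "\<sigma> permutes UNIV" "\<sigma> -` B = B'" "\<sigma> -` C = C'"
proof -
  obtain f1 where f1: "bij_betw f1 B' B" using finite_same_card_bij[of B' B] assms by auto
  obtain f2 where f2: "bij_betw f2 C' C" using finite_same_card_bij[of C' C] assms by auto
  have "card (- (B' \<union> C')) = card (- (B \<union> C))"
    using assms by (simp add: Compl_eq_Diff_UNIV card_Diff_subset card_Un_disjoint)
  then obtain f3 where f3: "bij_betw f3 (- (B' \<union> C')) (- (B \<union> C))"
    using finite_same_card_bij[of "- (B' \<union> C')" "- (B \<union> C)"] by auto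
  define \<sigma> where "\<sigma> x = (if x \<in> B' then f1 x else if x \<in> C' then f2 x else f3 x)" for x
  have s1: "bij_betw \<sigma> B' B"
    using f1 unfolding \<sigma>_def by (rule bij_betw_cong[THEN iffD1, rotated]) auto
  have s2: "bij_betw \<sigma> C' C"
    using f2 assms(2) unfolding \<sigma>_def by (intro bij_betw_cong[THEN iffD1, OF _ f2]) auto
  have s3: "bij_betw \<sigma> (- (B' \<union> C')) (- (B \<union> C))"
    unfolding \<sigma>_def by (intro bij_betw_cong[THEN iffD1, OF _ f3]) auto
  have "bij_betw \<sigma> ((B' \<union> C') \<union> - (B' \<union> C')) ((B \<union> C) \<union> - (B \<union> C))"
    by (intro bij_betw_combine s1 s2 s3) (use assms in auto)
  moreover have "(B' \<union> C') \<union> - (B' \<union> C') = UNIV" "(B \<union> C) \<union> - (B \<union> C) = UNIV"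
    by auto
  ultimately have "bij_betw \<sigma> UNIV UNIV"
    by metis
  then have "\<sigma> permutes UNIV"
    by (intro bij_imp_permutes) auto
  moreover have "\<sigma> -` B = B'" "\<sigma> -` C = C'"
    using bij_betw_apply[OF s1] bij_betw_apply[OF s2] bij_betw_apply[OF s3] assms(1,2) by blast+
  ultimately show ?thesis
    by (rule that)
qed

lemma corner_triangle_congruent:
  assumes "B \<inter> C = {}" "B' \<inter> C' = {}" "card B = card B'" "card C = card C'"
  obtains g where "g \<in> hyperoct" "g ` corner_triangle B C = corner_triangle B' C'"
proof -
  obtain \<sigma> where \<sigma>: "\<sigma> permutes UNIV" "\<sigma> -` B = B'" "\<sigma> -` C = C'"
    by (rule permutation_carrying_disjoint_pair[OF assms])
  then have g: "hyperoct_map \<sigma> {} \<in> hyperoct"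
    unfolding hyperoct_def by blast
  have "hyperoct_map \<sigma> {} ` {0, indicator_vector B, indicator_vector C}
          = {0, indicator_vector B', indicator_vector C'}"
    unfolding \<sigma>(2,3)[symmetric] by (simp add: hyperoct_map_def indicator_vector_def zero_vec_def)
  then show ?thesis
    using that[OF g] hyperoct_image_convex_hull[OF g] by (simp add: corner_triangle_def)
qed

lemma legs_eq_if_sq_sides_eq:
  fixes p q p' q' :: real
  assumes "0 < p" "0 < q" "0 < p'" "0 < q'" "{p, q, p + q} = {p', q', p' + q'}"
  shows "{p, q} = {p', q'}"
proof -
  have mem: "x \<in> {p', q', p' + q'} \<longleftrightarrow> x \<in> {p, q, p + q}" for x
    using assms(5) by simp
  have "p + q = p' + q'"
    using mem[of "p + q"] mem[of "p' + q'"] assms(1-4) by auto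
  moreover have "p = p' \<or> p = q' \<or> p = p' + q'"
    using mem[of p] by simp
  ultimately show ?thesis
    using assms(1-4) by auto
qed

lemma B_orbit_eq_iff_sq_side_lengths_eq:
  assumes "right_zo_triangle T" "right_zo_triangle T'"
  shows "B_orbit T = B_orbit T' \<longleftrightarrow> sq_side_lengths T = sq_side_lengths T'"
proof
  show "B_orbit T = B_orbit T' \<Longrightarrow> sq_side_lengths T = sq_side_lengths T'"
    using B_orbit_eq_iff sq_side_lengths_hyperoct_image by metis
next
  assume sq_eq: "sq_side_lengths T = sq_side_lengths T'"
  obtain g B C where g: "g \<in> hyperoct" "B \<inter> C = {}" "B \<noteq> {}" "C \<noteq> {}"
    "g ` T = corner_triangle B C"
    using right_zo_triangle_normal_form[OF assms(1)] .
  obtain g' B' C' where g': "g' \<in> hyperoct" "B' \<inter> C' = {}" "B' \<noteq> {}" "C' \<noteq> {}"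
    "g' ` T' = corner_triangle B' C'"
    using right_zo_triangle_normal_form[OF assms(2)] .
  have "sq_side_lengths (corner_triangle B C) = sq_side_lengths (corner_triangle B' C')"
    using sq_eq g(5) g'(5) sq_side_lengths_hyperoct_image[OF g(1), of T]
      sq_side_lengths_hyperoct_image[OF g'(1), of T'] by simp
  then have "{real (card B), real (card C)} = {real (card B'), real (card C')}"
    using g g' by (intro legs_eq_if_sq_sides_eq) (auto simp: sq_side_lengths_corner_triangle)
  then have "card B = card B' \<and> card C = card C' \<or> card B = card C' \<and> card C = card B'"
    by (simp add: doubleton_eq_iff)
  then obtain B'' C'' where B'': "B'' \<inter> C'' = {}" "card B = card B''" "card C = card C''"
      "corner_triangle B'' C'' = g' ` T'"
  proof (elim disjE)
    assume "card B = card B' \<and> card C = card C'"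
    then show thesis using that[of B' C'] g'(2,5) by simp
  next
    assume "card B = card C' \<and> card C = card B'"
    then show thesis using that[of C' B'] g'(2,5) corner_triangle_commute by (metis Int_commute)
  qed
  obtain h where h: "h \<in> hyperoct" "h ` corner_triangle B C = corner_triangle B'' C''"
    by (rule corner_triangle_congruent[OF g(2) B''(1-3)])
  have "B_orbit T = B_orbit (h ` g ` T)"
    using B_orbit_image[OF h(1), of "g ` T"] B_orbit_image[OF g(1), of T] by simp
  also have "\<dots> = B_orbit T'"
    using B_orbit_image[OF g'(1), of T'] h(2) g(5) B''(4) by simp
  finally show "B_orbit T = B_orbit T'" .
qed

section \<open>Counting the orbits\<close>

lemma card_image_eq_of_same_kernel:
  assumes "\<And>x y. x \<in> A \<Longrightarrow> y \<in> A \<Longrightarrow> f x = f y \<longleftrightarrow> g x = g y"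
  shows "card (f ` A) = card (g ` A)"
proof -
  define r where "r u = (SOME x. x \<in> A \<and> f x = u)" for u
  have r: "r (f x) \<in> A" "f (r (f x)) = f x" if "x \<in> A" for x
    using someI[of "\<lambda>y. y \<in> A \<and> f y = f x" x] that by (auto simp: r_def)
  have gr: "g (r (f x)) = g x" if "x \<in> A" for x
    using assms[of "r (f x)" x] r[OF that] that by blast
  have "(\<lambda>u. g (r u)) ` f ` A = g ` A"
    unfolding image_image using gr by (rule image_cong[OF refl])
  moreover have "inj_on (\<lambda>u. g (r u)) (f ` A)"
  proof (rule inj_onI)
    fix u v assume "u \<in> f ` A" "v \<in> f ` A" "g (r u) = g (r v)"
    then obtain x y where "x \<in> A" "y \<in> A" "u = f x" "v = f y" "g x = g y"
      using gr by auto
    then show "u = v" using assms by blast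
  qed
  ultimately show ?thesis
    by (metis card_image)
qed

definition leg_pairs :: "nat \<Rightarrow> (nat \<times> nat) set" where
  "leg_pairs n = {(p, q). 1 \<le> p \<and> p \<le> q \<and> p + q \<le> n}"

lemma finite_leg_pairs: "finite (leg_pairs n)"
  by (rule finite_subset[of _ "{0..n} \<times> {0..n}"]) (auto simp: leg_pairs_def)

lemma card_leg_pairs: "card (leg_pairs n) = (n div 2) * ((n + 1) div 2)"
proof (induction n)
  case 0
  have "leg_pairs 0 = {}" by (auto simp: leg_pairs_def)
  then show ?case by simp
next
  case (Suc n)
  define E where "E = (\<lambda>p. (p, Suc n - p)) ` {1..Suc n div 2}"
  have "leg_pairs (Suc n) = leg_pairs n \<union> E" "leg_pairs n \<inter> E = {}"
    by (auto simp: leg_pairs_def E_def image_iff)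
  moreover have "card E = Suc n div 2"
    unfolding E_def by (subst card_image) (auto simp: inj_on_def)
  ultimately have "card (leg_pairs (Suc n)) = card (leg_pairs n) + Suc n div 2"
    using finite_leg_pairs by (simp add: E_def card_Un_disjoint)
  also have "\<dots> = Suc n div 2 * ((Suc n + 1) div 2)"
    unfolding Suc.IH by (cases "even n") (auto elim!: evenE oddE)
  finally show ?case .
qed

lemma floor_times_ceiling_half:
  "\<lfloor>real n / 2\<rfloor> * \<lceil>real n / 2\<rceil> = int ((n div 2) * ((n + 1) div 2))"
proof (cases "even n")
  case True
  then show ?thesis by (auto elim!: evenE)
next
  case False
  then obtain k where n: "n = 2 * k + 1" by (auto elim!: oddE)
  then have "real n / 2 = real k + 1 / 2" by simp
  moreover have "\<lfloor>real k + 1 / 2\<rfloor> = int k" by (intro floor_unique) auto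
  moreover have "\<lceil>real k + 1 / 2\<rceil> = int k + 1" by (intro ceiling_unique) auto
  moreover have "n div 2 = k" "(n + 1) div 2 = k + 1" using n by auto
  ultimately show ?thesis by (simp only:) (simp add: algebra_simps)
qed

definition right_sq_sides :: "nat \<times> nat \<Rightarrow> real set" where
  "right_sq_sides = (\<lambda>(p, q). {real p, real q, real p + real q})"

lemma inj_on_right_sq_sides: "inj_on right_sq_sides (leg_pairs n)"
proof (rule inj_onI, clarify)
  fix p q p' q'
  assume pq: "(p, q) \<in> leg_pairs n" "(p', q') \<in> leg_pairs n"
    and eq: "right_sq_sides (p, q) = right_sq_sides (p', q')"
  have "{real p, real q} = {real p', real q'}"
    using pq eq by (intro legs_eq_if_sq_sides_eq) (auto simp: leg_pairs_def right_sq_sides_def)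
  then show "p = p' \<and> q = q'"
    using pq by (auto simp: leg_pairs_def doubleton_eq_iff)
qed

lemma obtain_disjoint_subsets_with_card:
  assumes "finite S" "p + q \<le> card S"
  obtains B C where "B \<subseteq> S" "C \<subseteq> S" "B \<inter> C = {}" "card B = p" "card C = q"
proof -
  obtain U where U: "U \<subseteq> S" "card U = p + q"
    using obtain_subset_with_card_n assms(2) by metis
  moreover obtain B where B: "B \<subseteq> U" "card B = p" "finite B"
    using obtain_subset_with_card_n[of p U] U by auto
  ultimately have "card (U - B) = q" by (simp add: card_Diff_subset)
  then show ?thesis
    using that[of B "U - B"] B U by blast
qed

lemma sq_side_lengths_right_zo_triangles:
  "sq_side_lengths ` {T :: (real^'n) set. right_zo_triangle T} = right_sq_sides ` leg_pairs CARD('n)"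
proof
  show "sq_side_lengths ` {T :: (real^'n) set. right_zo_triangle T} \<subseteq> right_sq_sides ` leg_pairs CARD('n)"
  proof clarify
    fix T :: "(real^'n) set"
    assume "right_zo_triangle T"
    then obtain g B C where g: "g \<in> hyperoct" "B \<inter> C = {}" "B \<noteq> {}" "C \<noteq> {}"
      "g ` T = corner_triangle B C"
      by (rule right_zo_triangle_normal_form)
    have "card B + card C = card (B \<union> C)" using g(2) by (simp add: card_Un_disjoint)
    also have "\<dots> \<le> CARD('n)" by (rule card_mono) auto
    finally have "(min (card B) (card C), max (card B) (card C)) \<in> leg_pairs CARD('n)"
      using g(3,4) by (auto simp: leg_pairs_def Suc_le_eq card_gt_0_iff)
    moreover have "sq_side_lengths T = right_sq_sides (min (card B) (card C), max (card B) (card C))"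
      using sq_side_lengths_hyperoct_image[OF g(1), of T] g
      by (auto simp: sq_side_lengths_corner_triangle right_sq_sides_def min_def max_def)
    ultimately show "sq_side_lengths T \<in> right_sq_sides ` leg_pairs CARD('n)" by blast
  qed
  show "right_sq_sides ` leg_pairs CARD('n) \<subseteq> sq_side_lengths ` {T :: (real^'n) set. right_zo_triangle T}"
  proof clarify
    fix p q assume "(p, q) \<in> leg_pairs CARD('n)"
    then have pq: "1 \<le> p" "1 \<le> q" "p + q \<le> card (UNIV :: 'n set)"
      by (auto simp: leg_pairs_def)
    then obtain B C :: "'n set" where BC: "B \<inter> C = {}" "card B = p" "card C = q"
      using obtain_disjoint_subsets_with_card[of "UNIV :: 'n set" p q] by auto
    then have "B \<noteq> {}" "C \<noteq> {}" using pq by auto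
    then have "right_zo_triangle (corner_triangle B C)"
      "sq_side_lengths (corner_triangle B C) = right_sq_sides (p, q)"
      using BC by (simp_all add: right_zo_triangle_corner_triangle sq_side_lengths_corner_triangle
          right_sq_sides_def)
    then show "right_sq_sides (p, q) \<in> sq_side_lengths ` {T :: (real^'n) set. right_zo_triangle T}"
      by (metis (mono_tags) image_eqI mem_Collect_eq)
  qed
qed

theorem corollary4p19:
  shows "int (card (B_orbit ` {T :: (real^'n) set. right_zo_triangle T}))
           = \<lfloor>real CARD('n) / 2\<rfloor> * \<lceil>real CARD('n) / 2\<rceil>"
proof -
  have "card (B_orbit ` {T :: (real^'n) set. right_zo_triangle T})
      = card (sq_side_lengths ` {T :: (real^'n) set. right_zo_triangle T})"
    by (rule card_image_eq_of_same_kernel) (simp add: B_orbit_eq_iff_sq_side_lengths_eq)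
  also have "\<dots> = card (leg_pairs CARD('n))"
    unfolding sq_side_lengths_right_zo_triangles by (rule card_image[OF inj_on_right_sq_sides])
  finally show ?thesis
    by (simp add: card_leg_pairs floor_times_ceiling_half)
qed

end
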